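(* Let $n\ge 6$ and let $CTG_n$ be the set of chemical tricyclic graphs on $n$ vertices. Define the following subsets of $CTG_n$ (in each, all $m_{i,j}$ not listed are $0$): for $j=0,1,\dots,5$, $\gamma_{9+j}$ is the set of $G\in CTG_n$ with $n_4=0,n_3=4,n_2=n-4,n_1=0$, $m_{2,3}=2+2j$, $m_{3,3}=5-j$, $m_{2,2}=n-5-j$; and $\gamma_{65}$ is the set of $G\in CTG_n$ with $n_4=0,n_3=5,n_2=n-6,n_1=1$, $m_{1,2}=1$, $m_{2,3}=1$, $m_{3,3}=7$, $m_{2,2}=n-7$. Let $G_1\in\gamma_9$, $G_2\in\gamma_{10}$, $G_3\in\gamma_{11}$, $G_4\in\gamma_{12}$, $G_5\in\gamma_{13}$, $G_6\in\gamma_{14}$, $G_7\in\gamma_{65}$, and let $G\in CTG_n$ not belong to $\gamma_9\cup\cdots\cup\gamma_{14}\cup\gamma_{65}$. Then $SO(G_1)<SO(G_2)<SO(G_3)<SO(G_4)<SO(G_5)<SO(G_6)<SO(G_7)<SO(G)$.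
   Context: All graphs are simple and connected. A chemical graph is a graph with maximum degree at most $4$; a tricyclic graph is a connected graph with $n$ vertices and $n+2$ edges. $d_G(u)$ is the degree of $u$, $n_i$ the number of vertices of degree $i$, and $m_{i,j}$ the number of edges joining a vertex of degree $i$ to a vertex of degree $j$. The Sombor index is $SO(G)=\sum_{uv\in E(G)}\sqrt{d_G(u)^2+d_G(v)^2}$. *)

theory Defs
  imports Complex_Main
begin

type_synonym 'a graph = "'a set \<times> 'a set set"

definition verts :: "'a graph \<Rightarrow> 'a set" where "verts G = fst G"
definition edges :: "'a graph \<Rightarrow> 'a set set" where "edges G = snd G"

definition simple_graph :: "'a graph \<Rightarrow> bool" where
  "simple_graph G \<longleftrightarrow> finite (verts G) \<and>
     (\<forall>e\<in>edges G. \<exists>u v. e = {u, v} \<and> u \<noteq> v \<and> u \<in> verts G \<and> v \<in> verts G)"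

definition adj :: "'a graph \<Rightarrow> 'a \<Rightarrow> 'a \<Rightarrow> bool" where
  "adj G u v \<longleftrightarrow> {u, v} \<in> edges G \<and> u \<noteq> v"

definition connected_graph :: "'a graph \<Rightarrow> bool" where
  "connected_graph G \<longleftrightarrow> verts G \<noteq> {} \<and>
     (\<forall>u\<in>verts G. \<forall>v\<in>verts G. (adj G)\<^sup>*\<^sup>* u v)"

definition deg :: "'a graph \<Rightarrow> 'a \<Rightarrow> nat" where
  "deg G v = card {e \<in> edges G. v \<in> e}"

definition CTG :: "nat \<Rightarrow> 'a graph \<Rightarrow> bool" where
  "CTG n G \<longleftrightarrow> simple_graph G \<and> connected_graph G \<and> card (verts G) = n \<and>
     card (edges G) = n + 2 \<and> (\<forall>v\<in>verts G. deg G v \<le> 4)"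

definition nv :: "'a graph \<Rightarrow> nat \<Rightarrow> nat" where
  "nv G i = card {v \<in> verts G. deg G v = i}"

definition me :: "'a graph \<Rightarrow> nat \<Rightarrow> nat \<Rightarrow> nat" where
  "me G i j = card {e \<in> edges G. \<exists>u v. e = {u, v} \<and> u \<noteq> v \<and> deg G u = i \<and> deg G v = j}"

definition SO :: "'a graph \<Rightarrow> real" where
  "SO G = (\<Sum>e\<in>edges G. sqrt (\<Sum>v\<in>e. (real (deg G v))^2))"

definition edge_profile :: "'a graph \<Rightarrow> (nat \<Rightarrow> nat \<Rightarrow> int) \<Rightarrow> bool" where
  "edge_profile G f \<longleftrightarrow> (\<forall>i j. 1 \<le> i \<longrightarrow> i \<le> j \<longrightarrow> j \<le> 4 \<longrightarrow> int (me G i j) = f i j)"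

text \<open>gamma_{9+k}, k = 0..5.\<close>
definition gamma_k :: "nat \<Rightarrow> nat \<Rightarrow> 'a graph \<Rightarrow> bool" where
  "gamma_k n k G \<longleftrightarrow> CTG n G \<and> nv G 4 = 0 \<and> nv G 3 = 4 \<and> int (nv G 2) = int n - 4 \<and> nv G 1 = 0 \<and>
     edge_profile G (\<lambda>i j. if (i, j) = (2, 3) then 2 + 2 * int k
                           else if (i, j) = (3, 3) then 5 - int k
                           else if (i, j) = (2, 2) then int n - 5 - int k
                           else 0)"

definition gamma65 :: "nat \<Rightarrow> 'a graph \<Rightarrow> bool" where
  "gamma65 n G \<longleftrightarrow> CTG n G \<and> nv G 4 = 0 \<and> nv G 3 = 5 \<and> int (nv G 2) = int n - 6 \<and> nv G 1 = 1 \<and>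
     edge_profile G (\<lambda>i j. if (i, j) = (1, 2) then 1
                           else if (i, j) = (2, 3) then 1
                           else if (i, j) = (3, 3) then 7
                           else if (i, j) = (2, 2) then int n - 7
                           else 0)"

end

theory Submission
  imports Defs
begin

(* Put s(i,j) = sqrt(i^2 + j^2) + 3 sqrt 2 (1/i + 1/j) - 5 sqrt 2. This correction of the Sombor
   weight of an edge by an affine function of 1/i + 1/j vanishes at (2,2) and (3,3) and is positive
   for all other degree pairs in {1..4}. In a graph without isolated vertices the edge sum of
   1/d(u) + 1/d(v) is the number n of vertices, and a tricyclic graph has n + 2 edges, so
   SO(G) = sqrt 2 (2n + 10) + (sum of s over the edges).
   Hence SO = sqrt 2 (2n + 10) + (2 + 2k) s(2,3) on gamma_{9+k} and sqrt 2 (2n + 10) + s(1,2) + s(2,3)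
   on gamma_65, and the chain follows from 0 < 11 s(2,3) < s(1,2). For any other chemical tricyclic
   graph the handshake identities for the m_{i,j} leave three cases: a vertex of degree 4 forces at
   least four edges at such vertices, with slack at least 4 s(3,4) > s(1,2) + s(2,3); a pendant vertex
   without degree-4 vertices forces more pendant or (2,3) edges than in gamma_65; and a graph with
   degrees only 2 and 3 lies in some gamma_{9+k}, by connectivity. *)

lemma simple_graph_edgeE:
  assumes "simple_graph G" "e \<in> edges G"
  obtains u v where "e = {u, v}" "u \<noteq> v" "u \<in> verts G" "v \<in> verts G"
  using assms by (auto simp: simple_graph_def)

lemma edge_subset_verts:
  assumes "simple_graph G" "e \<in> edges G"
  shows "e \<subseteq> verts G"
  using assms by (auto simp: simple_graph_def)

lemma finite_edges:
  assumes "simple_graph G"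
  shows "finite (edges G)"
proof -
  have "edges G \<subseteq> Pow (verts G)"
    using edge_subset_verts[OF assms] by blast
  moreover have "finite (verts G)"
    using assms by (simp add: simple_graph_def)
  ultimately show ?thesis
    by (meson finite_Pow_iff finite_subset)
qed

lemma deg_pos_if_mem_edge:
  assumes "simple_graph G" "e \<in> edges G" "u \<in> e"
  shows "0 < deg G u"
  using assms finite_edges[OF assms(1)] unfolding deg_def
  by (subst card_gt_0_iff) auto

lemma me_commute: "me G i j = me G j i"
proof -
  have "(\<exists>u v. e = {u, v} \<and> u \<noteq> v \<and> deg G u = i \<and> deg G v = j)
    \<longleftrightarrow> (\<exists>u v. e = {u, v} \<and> u \<noteq> v \<and> deg G u = j \<and> deg G v = i)" for e
    by (auto simp: insert_commute)
  then show ?thesis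
    unfolding me_def by simp
qed

lemma me_pos_if_edge:
  assumes "simple_graph G" "{u, v} \<in> edges G" "u \<noteq> v"
  shows "1 \<le> me G (deg G u) (deg G v)"
proof -
  let ?E = "{e \<in> edges G. \<exists>a b. e = {a, b} \<and> a \<noteq> b \<and> deg G a = deg G u \<and> deg G b = deg G v}"
  have "{u, v} \<in> ?E"
    using assms(2,3) by (intro CollectI conjI exI[of _ u] exI[of _ v]) simp_all
  moreover have "finite ?E"
    using finite_edges[OF assms(1)] by simp
  ultimately have "0 < card ?E"
    by (subst card_gt_0_iff) blast
  then show ?thesis
    by (simp add: me_def)
qed

lemma two_le_nv_if_me_diag:
  assumes "simple_graph G" "1 \<le> me G i i"
  shows "2 \<le> nv G i"
proof -
  obtain u v where uv: "{u, v} \<in> edges G" "u \<noteq> v" "deg G u = i" "deg G v = i"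
  proof -
    have "{e \<in> edges G. \<exists>u v. e = {u, v} \<and> u \<noteq> v \<and> deg G u = i \<and> deg G v = i} \<noteq> {}"
      using assms(2) unfolding me_def by (metis card.empty not_one_le_zero)
    then show thesis
      using that by blast
  qed
  then have "{u, v} \<subseteq> {v \<in> verts G. deg G v = i}"
    using edge_subset_verts[OF assms(1) uv(1)] by blast
  moreover have "finite {v \<in> verts G. deg G v = i}"
    using assms(1) by (simp add: simple_graph_def)
  ultimately show ?thesis
    unfolding nv_def using uv(2) by (metis card_2_iff card_mono)
qed

lemma connected_graph_edge_leaving:
  assumes "connected_graph G" "x \<in> S" "x \<in> verts G" "y \<in> verts G" "y \<notin> S"
  obtains u v where "{u, v} \<in> edges G" "u \<in> S" "v \<notin> S"
proof -
  have "(adj G)\<^sup>*\<^sup>* x y"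
    using assms by (simp add: connected_graph_def)
  then have "\<exists>u v. {u, v} \<in> edges G \<and> u \<in> S \<and> v \<notin> S"
    using \<open>y \<notin> S\<close>
  proof (induction rule: rtranclp_induct)
    case base
    with \<open>x \<in> S\<close> show ?case by simp
  next
    case (step w z)
    then show ?case
      by (cases "w \<in> S") (auto simp: adj_def)
  qed
  then show thesis
    using that by blast
qed

lemma sum_deg_mult_eq_sum_edges:
  fixes \<psi> :: "'a \<Rightarrow> 'b::comm_semiring_1"
  assumes "simple_graph G"
  shows "(\<Sum>v\<in>verts G. of_nat (deg G v) * \<psi> v) = (\<Sum>e\<in>edges G. \<Sum>v\<in>e. \<psi> v)"
proof -
  have "(\<Sum>v\<in>verts G. of_nat (deg G v) * \<psi> v) = (\<Sum>v\<in>verts G. \<Sum>e\<in>{e \<in> edges G. v \<in> e}. \<psi> v)"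
    by (simp add: deg_def)
  also have "\<dots> = (\<Sum>e\<in>edges G. \<Sum>v\<in>{v \<in> verts G. v \<in> e}. \<psi> v)"
    using assms finite_edges[OF assms] by (intro sum.swap_restrict) (simp_all add: simple_graph_def)
  also have "\<dots> = (\<Sum>e\<in>edges G. \<Sum>v\<in>e. \<psi> v)"
  proof (rule sum.cong[OF refl])
    fix e
    assume "e \<in> edges G"
    then have "{v \<in> verts G. v \<in> e} = e"
      using edge_subset_verts[OF assms] by blast
    then show "(\<Sum>v\<in>{v \<in> verts G. v \<in> e}. \<psi> v) = (\<Sum>v\<in>e. \<psi> v)"
      by simp
  qed
  finally show ?thesis .
qed

lemma sum_edges_inverse_deg:
  assumes "simple_graph G" "\<And>v. v \<in> verts G \<Longrightarrow> 0 < deg G v"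
  shows "(\<Sum>e\<in>edges G. \<Sum>v\<in>e. 1 / real (deg G v)) = real (card (verts G))"
proof -
  have "(\<Sum>v\<in>verts G. real (deg G v) * (1 / real (deg G v))) = (\<Sum>v\<in>verts G. 1)"
    using assms(2) by (intro sum.cong) auto
  then show ?thesis
    using sum_deg_mult_eq_sum_edges[OF assms(1), of "\<lambda>v. 1 / real (deg G v)"] by simp
qed

lemma card_verts_by_degree:
  assumes "finite (verts G)" "finite D" "\<And>v. v \<in> verts G \<Longrightarrow> deg G v \<in> D"
  shows "card (verts G) = (\<Sum>d\<in>D. nv G d)"
proof -
  have "deg G ` verts G \<subseteq> D"
    using assms(3) by blast
  then show ?thesis
    using sum.group[OF assms(1,2), of "deg G" "\<lambda>_. 1::nat"] by (simp add: nv_def)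
qed

definition degree_pair :: "'a graph \<Rightarrow> 'a set \<Rightarrow> nat \<times> nat" where
  "degree_pair G e = (Min (deg G ` e), Max (deg G ` e))"

lemma degree_pair_doubleton:
  "degree_pair G {u, v} = (min (deg G u) (deg G v), max (deg G u) (deg G v))"
  by (simp add: degree_pair_def)

lemma me_eq_card_degree_pair:
  assumes "simple_graph G" "i \<le> j"
  shows "me G i j = card {e \<in> edges G. degree_pair G e = (i, j)}"
proof -
  have "(\<exists>u v. e = {u, v} \<and> u \<noteq> v \<and> deg G u = i \<and> deg G v = j) \<longleftrightarrow> degree_pair G e = (i, j)"
    if e_edge: "e \<in> edges G" for e
  proof -
    obtain a b where e: "e = {a, b}" "a \<noteq> b"
      using simple_graph_edgeE[OF assms(1) e_edge] by blast
    show ?thesis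
    proof
      assume "\<exists>u v. e = {u, v} \<and> u \<noteq> v \<and> deg G u = i \<and> deg G v = j"
      then show "degree_pair G e = (i, j)"
        using assms(2) by (auto simp: degree_pair_doubleton)
    next
      assume "degree_pair G e = (i, j)"
      then have "min (deg G a) (deg G b) = i" "max (deg G a) (deg G b) = j"
        using e by (simp_all add: degree_pair_doubleton)
      then show "\<exists>u v. e = {u, v} \<and> u \<noteq> v \<and> deg G u = i \<and> deg G v = j"
        using e by (cases "deg G a \<le> deg G b") (auto simp: insert_commute min_def max_def)
    qed
  qed
  then show ?thesis
    unfolding me_def by (metis (no_types, lifting) Collect_cong)
qed

definition degree_pairs :: "nat \<Rightarrow> (nat \<times> nat) set" where
  "degree_pairs \<Delta> = {(i, j). 1 \<le> i \<and> i \<le> j \<and> j \<le> \<Delta>}"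

lemma finite_degree_pairs: "finite (degree_pairs \<Delta>)"
proof -
  have "degree_pairs \<Delta> \<subseteq> {..\<Delta>} \<times> {..\<Delta>}"
    by (auto simp: degree_pairs_def)
  then show ?thesis
    by (rule finite_subset) simp
qed

lemma degree_pairs_4:
  "degree_pairs 4 = {(1,1), (1,2), (1,3), (1,4), (2,2), (2,3), (2,4), (3,3), (3,4), (4,4)}"
proof (intro set_eqI iffI)
  fix p
  assume "p \<in> degree_pairs 4"
  then obtain i j where p: "p = (i, j)" "1 \<le> i" "i \<le> j" "j \<le> 4"
    by (auto simp: degree_pairs_def)
  then have "i = 1 \<or> i = 2 \<or> i = 3 \<or> i = 4" "j = 1 \<or> j = 2 \<or> j = 3 \<or> j = 4"
    by linarith+
  with p show "p \<in> {(1,1), (1,2), (1,3), (1,4), (2,2), (2,3), (2,4), (3,3), (3,4), (4,4)}"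
    by (elim disjE) simp_all
qed (auto simp: degree_pairs_def)

lemma sum_edges_by_degree_pairs:
  fixes \<Phi> :: "nat \<Rightarrow> nat \<Rightarrow> 'b::comm_semiring_1"
  assumes G: "simple_graph G" and deg_le: "\<And>v. v \<in> verts G \<Longrightarrow> deg G v \<le> \<Delta>"
    and sym: "\<And>i j. \<Phi> i j = \<Phi> j i"
    and F: "\<And>u v. {u, v} \<in> edges G \<Longrightarrow> u \<noteq> v \<Longrightarrow> F {u, v} = \<Phi> (deg G u) (deg G v)"
  shows "(\<Sum>e\<in>edges G. F e) = (\<Sum>(i, j)\<in>degree_pairs \<Delta>. of_nat (me G i j) * \<Phi> i j)"
proof -
  have F_class: "F e = \<Phi> i j" if e_class: "e \<in> edges G" "degree_pair G e = (i, j)" for e i j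
  proof -
    obtain u v where e: "e = {u, v}" "u \<noteq> v"
      using simple_graph_edgeE[OF G e_class(1)] by blast
    then show ?thesis
      using e_class F[of u v] sym by (cases "deg G u \<le> deg G v") (auto simp: degree_pair_doubleton)
  qed
  have "degree_pair G ` edges G \<subseteq> degree_pairs \<Delta>"
  proof
    fix p
    assume "p \<in> degree_pair G ` edges G"
    then obtain e where e: "e \<in> edges G" "p = degree_pair G e"
      by blast
    then obtain u v where "e = {u, v}" "u \<in> verts G" "v \<in> verts G"
      using simple_graph_edgeE[OF G e(1)] by blast
    moreover have "0 < deg G u" "0 < deg G v"
      using deg_pos_if_mem_edge[OF G e(1)] calculation(1) by auto
    ultimately show "p \<in> degree_pairs \<Delta>"
      using deg_le e(2) by (auto simp: degree_pairs_def degree_pair_doubleton)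
  qed
  then have "(\<Sum>e\<in>edges G. F e) = (\<Sum>p\<in>degree_pairs \<Delta>. \<Sum>e\<in>{e \<in> edges G. degree_pair G e = p}. F e)"
    by (rule sum.group[OF finite_edges[OF G] finite_degree_pairs, symmetric])
  also have "\<dots> = (\<Sum>(i, j)\<in>degree_pairs \<Delta>. of_nat (me G i j) * \<Phi> i j)"
  proof (rule sum.cong[OF refl], clarify)
    fix i j
    assume "(i, j) \<in> degree_pairs \<Delta>"
    then have "me G i j = card {e \<in> edges G. degree_pair G e = (i, j)}"
      using me_eq_card_degree_pair[OF G] by (simp add: degree_pairs_def)
    then show "(\<Sum>e\<in>{e \<in> edges G. degree_pair G e = (i, j)}. F e) = of_nat (me G i j) * \<Phi> i j"
      using F_class by simp
  qed
  finally show ?thesis .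
qed

lemma card_edges_by_degree_pairs:
  assumes "simple_graph G" "\<And>v. v \<in> verts G \<Longrightarrow> deg G v \<le> \<Delta>"
  shows "card (edges G) = (\<Sum>(i, j)\<in>degree_pairs \<Delta>. me G i j)"
proof -
  have "card (edges G) = (\<Sum>e\<in>edges G. 1)"
    by simp
  also have "\<dots> = (\<Sum>(i, j)\<in>degree_pairs \<Delta>. of_nat (me G i j) * (1::nat))"
    by (rule sum_edges_by_degree_pairs[OF assms]) simp_all
  finally show ?thesis
    by simp
qed

lemma handshake_by_degree_pairs:
  assumes G: "simple_graph G" and deg_le: "\<And>v. v \<in> verts G \<Longrightarrow> deg G v \<le> \<Delta>"
  shows "d * nv G d = (\<Sum>(i, j)\<in>degree_pairs \<Delta>.
      me G i j * ((if i = d then 1 else 0) + (if j = d then 1 else 0)))"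
proof -
  have fin: "finite (verts G)"
    using G by (simp add: simple_graph_def)
  have "d * nv G d = (\<Sum>v\<in>{v \<in> verts G. deg G v = d}. d)"
    by (simp add: nv_def)
  also have "\<dots> = (\<Sum>v\<in>verts G. deg G v * (if deg G v = d then 1 else 0))"
    using sum.inter_filter[OF fin, of "\<lambda>_. d"] by (auto intro: sum.cong)
  also have "\<dots> = (\<Sum>e\<in>edges G. \<Sum>v\<in>e. if deg G v = d then 1 else 0)"
    using sum_deg_mult_eq_sum_edges[OF G, of "\<lambda>v. if deg G v = d then 1 else 0::nat"] by simp
  also have "\<dots> = (\<Sum>(i, j)\<in>degree_pairs \<Delta>.
      of_nat (me G i j) * ((if i = d then 1 else 0) + (if j = d then 1 else 0)))"
    by (rule sum_edges_by_degree_pairs[OF G deg_le]) simp_all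
  finally show ?thesis
    by simp
qed

lemma nv_eq_0_iff:
  assumes "finite (verts G)"
  shows "nv G d = 0 \<longleftrightarrow> (\<forall>v\<in>verts G. deg G v \<noteq> d)"
  using assms by (auto simp: nv_def)

lemma CTG_deg_pos:
  assumes G: "CTG n G" and v: "v \<in> verts G"
  shows "0 < deg G v"
proof -
  have sg: "simple_graph G" and conn: "connected_graph G" and "edges G \<noteq> {}"
    using G by (auto simp: CTG_def)
  then obtain e where e: "e \<in> edges G"
    by blast
  then obtain a b where "e = {a, b}" "a \<noteq> b"
    using simple_graph_edgeE[OF sg] by blast
  then obtain w where w: "w \<in> e" "w \<noteq> v"
    by blast
  then have "w \<in> verts G"
    using edge_subset_verts[OF sg e] by blast
  then have "(adj G)\<^sup>*\<^sup>* v w"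
    using conn v by (simp add: connected_graph_def)
  then obtain y where "adj G v y"
    using w(2) by (metis converse_rtranclpE)
  then show ?thesis
    using deg_pos_if_mem_edge[OF sg] by (auto simp: adj_def)
qed

lemma CTG_degree_statistics:
  assumes "CTG n G"
  shows "n = nv G 1 + nv G 2 + nv G 3 + nv G 4"
    and "n + 2 = me G 1 1 + me G 1 2 + me G 1 3 + me G 1 4 + me G 2 2 + me G 2 3
                 + me G 2 4 + me G 3 3 + me G 3 4 + me G 4 4"
    and "nv G 1 = 2 * me G 1 1 + me G 1 2 + me G 1 3 + me G 1 4"
    and "2 * nv G 2 = me G 1 2 + 2 * me G 2 2 + me G 2 3 + me G 2 4"
    and "3 * nv G 3 = me G 1 3 + me G 2 3 + 2 * me G 3 3 + me G 3 4"
    and "4 * nv G 4 = me G 1 4 + me G 2 4 + me G 3 4 + 2 * me G 4 4"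
proof -
  have G: "simple_graph G" and deg_le: "\<And>v. v \<in> verts G \<Longrightarrow> deg G v \<le> 4"
    using assms by (simp_all add: CTG_def)
  have "deg G v \<in> {1, 2, 3, 4}" if "v \<in> verts G" for v
    using CTG_deg_pos[OF assms that] deg_le[OF that] by auto
  then show "n = nv G 1 + nv G 2 + nv G 3 + nv G 4"
    using card_verts_by_degree[of G "{1, 2, 3, 4}"] assms by (simp add: CTG_def simple_graph_def)
  show "n + 2 = me G 1 1 + me G 1 2 + me G 1 3 + me G 1 4 + me G 2 2 + me G 2 3
                 + me G 2 4 + me G 3 3 + me G 3 4 + me G 4 4"
    using card_edges_by_degree_pairs[OF G deg_le] assms by (simp add: CTG_def degree_pairs_4)
  note handshake = handshake_by_degree_pairs[OF G deg_le]
  show "nv G 1 = 2 * me G 1 1 + me G 1 2 + me G 1 3 + me G 1 4"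
    using handshake[of 1] by (simp add: degree_pairs_4)
  show "2 * nv G 2 = me G 1 2 + 2 * me G 2 2 + me G 2 3 + me G 2 4"
    using handshake[of 2] by (simp add: degree_pairs_4)
  show "3 * nv G 3 = me G 1 3 + me G 2 3 + 2 * me G 3 3 + me G 3 4"
    using handshake[of 3] by (simp add: degree_pairs_4)
  show "4 * nv G 4 = me G 1 4 + me G 2 4 + me G 3 4 + 2 * me G 4 4"
    using handshake[of 4] by (simp add: degree_pairs_4)
qed

definition sombor_slack :: "nat \<Rightarrow> nat \<Rightarrow> real" where
  "sombor_slack i j = sqrt (real i ^ 2 + real j ^ 2) + 3 * sqrt 2 * (1 / real i + 1 / real j) - 5 * sqrt 2"

definition sombor_excess :: "'a graph \<Rightarrow> real" where
  "sombor_excess G = (\<Sum>(i, j)\<in>degree_pairs 4. real (me G i j) * sombor_slack i j)"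

lemma SO_eq_sombor_excess:
  assumes "CTG n G"
  shows "SO G = sqrt 2 * (2 * real n + 10) + sombor_excess G"
proof -
  have G: "simple_graph G" and deg_le: "\<And>v. v \<in> verts G \<Longrightarrow> deg G v \<le> 4"
    and card_V: "card (verts G) = n" and card_E: "card (edges G) = n + 2"
    using assms by (simp_all add: CTG_def)
  have "sombor_excess G = (\<Sum>e\<in>edges G. sqrt (\<Sum>v\<in>e. (real (deg G v))\<^sup>2)
      + 3 * sqrt 2 * (\<Sum>v\<in>e. 1 / real (deg G v)) - 5 * sqrt 2)"
    unfolding sombor_excess_def sombor_slack_def
    by (rule sum_edges_by_degree_pairs[OF G deg_le, symmetric]) (simp_all add: add.commute)
  also have "\<dots> = SO G + 3 * sqrt 2 * real n - 5 * sqrt 2 * (real n + 2)"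
    using sum_edges_inverse_deg[OF G CTG_deg_pos[OF assms]] card_V card_E
    by (simp add: SO_def sum.distrib sum_subtractf sum_distrib_left[symmetric])
  finally show ?thesis
    by (simp add: algebra_simps)
qed

lemma sombor_slack_regular: "sombor_slack 2 2 = 0" "sombor_slack 3 3 = 0"
  unfolding sombor_slack_def using real_sqrt_mult[of 4 2] real_sqrt_mult[of 9 2] by simp_all

lemma sombor_slack_bounds:
  "28 / 10 < sombor_slack 1 1" "15289 / 10000 < sombor_slack 1 2" "sombor_slack 1 2 < 1529 / 1000"
  "17 / 10 < sombor_slack 1 3" "23 / 10 < sombor_slack 1 4" "7 / 100 < sombor_slack 2 3" "sombor_slack 2 3 < 701 / 10000"
  "58 / 100 < sombor_slack 2 4" "4038 / 10000 < sombor_slack 3 4" "7 / 10 < sombor_slack 4 4"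
proof -
  have "14142135 / 10000000 < sqrt 2" "sqrt 2 < 14142136 / 10000000" "22360679 / 10000000 < sqrt 5" "sqrt 5 < 2236068 / 1000000"
    "31622776 / 10000000 < sqrt 10" "36055512 / 10000000 < sqrt 13" "sqrt 13 < 36055513 / 10000000" "41231056 / 10000000 < sqrt 17"
    "44721359 / 10000000 < sqrt 20" "56568542 / 10000000 < sqrt 32"
    by (rule real_less_rsqrt real_less_lsqrt; simp add: power2_eq_square)+
  then show "28 / 10 < sombor_slack 1 1" "15289 / 10000 < sombor_slack 1 2" "sombor_slack 1 2 < 1529 / 1000"
    "17 / 10 < sombor_slack 1 3" "23 / 10 < sombor_slack 1 4" "7 / 100 < sombor_slack 2 3" "sombor_slack 2 3 < 701 / 10000"
    "58 / 100 < sombor_slack 2 4" "4038 / 10000 < sombor_slack 3 4" "7 / 10 < sombor_slack 4 4"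
    unfolding sombor_slack_def by simp_all
qed

lemma sombor_excess_expand:
  "sombor_excess G = real (me G 1 1) * sombor_slack 1 1 + real (me G 1 2) * sombor_slack 1 2
    + real (me G 1 3) * sombor_slack 1 3 + real (me G 1 4) * sombor_slack 1 4
    + real (me G 2 3) * sombor_slack 2 3 + real (me G 2 4) * sombor_slack 2 4
    + real (me G 3 4) * sombor_slack 3 4 + real (me G 4 4) * sombor_slack 4 4"
  by (simp add: sombor_excess_def degree_pairs_4 sombor_slack_regular add.assoc)

lemma sombor_excess_lower_bound:
  "28 / 10 * real (me G 1 1) + 15289 / 10000 * real (me G 1 2) + 17 / 10 * real (me G 1 3) + 23 / 10 * real (me G 1 4)
    + 7 / 100 * real (me G 2 3) + 58 / 100 * real (me G 2 4) + 4038 / 10000 * real (me G 3 4) + 7 / 10 * real (me G 4 4)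
    \<le> sombor_excess G"
proof -
  have scale: "c * real m \<le> real m * s" if "c < s" for c s :: real and m :: nat
    using mult_right_mono[of c s "real m"] that by (simp add: mult.commute)
  show ?thesis
    unfolding sombor_excess_expand by (intro add_mono scale sombor_slack_bounds)
qed

lemma edge_profile_iff:
  "edge_profile G f \<longleftrightarrow>
     int (me G 1 1) = f 1 1 \<and> int (me G 1 2) = f 1 2 \<and> int (me G 1 3) = f 1 3 \<and> int (me G 1 4) = f 1 4 \<and>
     int (me G 2 2) = f 2 2 \<and> int (me G 2 3) = f 2 3 \<and> int (me G 2 4) = f 2 4 \<and>
     int (me G 3 3) = f 3 3 \<and> int (me G 3 4) = f 3 4 \<and> int (me G 4 4) = f 4 4"
proof -
  have "edge_profile G f \<longleftrightarrow> (\<forall>(i, j)\<in>degree_pairs 4. int (me G i j) = f i j)"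
    by (auto simp: edge_profile_def degree_pairs_def)
  then show ?thesis
    by (simp add: degree_pairs_4)
qed

lemma SO_gamma_k:
  assumes "gamma_k n k G"
  shows "SO G = sqrt 2 * (2 * real n + 10) + (2 + 2 * real k) * sombor_slack 2 3"
proof -
  have G: "CTG n G" and m23: "int (me G 2 3) = 2 + 2 * int k"
    and "me G 1 1 = 0" "me G 1 2 = 0" "me G 1 3 = 0" "me G 1 4 = 0"
    and "me G 2 4 = 0" "me G 3 4 = 0" "me G 4 4 = 0"
    using assms by (simp_all add: gamma_k_def edge_profile_iff)
  moreover have "me G 2 3 = 2 + 2 * k"
    using m23 by linarith
  ultimately show ?thesis
    using SO_eq_sombor_excess[OF G] by (simp add: sombor_excess_expand)
qed

lemma SO_gamma65:
  assumes "gamma65 n G"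
  shows "SO G = sqrt 2 * (2 * real n + 10) + sombor_slack 1 2 + sombor_slack 2 3"
proof -
  have G: "CTG n G"
    and "me G 1 1 = 0" "me G 1 2 = 1" "me G 1 3 = 0" "me G 1 4 = 0"
    and "me G 2 3 = 1" "me G 2 4 = 0" "me G 3 4 = 0" "me G 4 4 = 0"
    using assms by (simp_all add: gamma65_def edge_profile_iff)
  then show ?thesis
    using SO_eq_sombor_excess[OF G] by (simp add: sombor_excess_expand)
qed

lemma CTG_degree_4_edges:
  assumes G: "CTG n G" and "1 \<le> nv G 4"
  shows "4 \<le> me G 1 4 + me G 2 4 + me G 3 4 \<or> 8 \<le> me G 1 4 + me G 2 4 + me G 3 4 + 2 * me G 4 4"
proof (cases "me G 4 4 = 0")
  case True
  then show ?thesis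
    using CTG_degree_statistics(6)[OF G] assms(2) by linarith
next
  case False
  then have "2 \<le> nv G 4"
    using two_le_nv_if_me_diag[of G 4] G by (simp add: CTG_def)
  then show ?thesis
    using CTG_degree_statistics(6)[OF G] by linarith
qed

lemma CTG_pendant_outside_gamma65:
  assumes G: "CTG n G" and "nv G 4 = 0" "1 \<le> nv G 1" "\<not> gamma65 n G"
  shows "1 \<le> me G 1 1 \<or> 1 \<le> me G 1 3 \<or> 2 \<le> me G 1 2 \<or> (1 \<le> me G 1 2 \<and> 3 \<le> me G 2 3)"
proof (rule ccontr)
  assume excluded: "\<not> ?thesis"
  note stats = CTG_degree_statistics[OF G]
  have m0: "me G 1 1 = 0" "me G 1 3 = 0" "me G 1 4 = 0" "me G 2 4 = 0" "me G 3 4 = 0" "me G 4 4 = 0"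
    using excluded stats(6) assms(2) by simp_all
  then have m12: "me G 1 2 = 1" "nv G 1 = 1"
    using excluded stats(3) assms(3) by simp_all
  then have m23_le: "me G 2 3 \<le> 2"
    using excluded by simp
  have nv3: "nv G 3 = 5" and m: "me G 2 3 + 2 * me G 3 3 = 15"
    using stats m0 m12 assms(2) by linarith+
  then have m23: "me G 2 3 = 1"
    using m23_le by presburger
  have "int (nv G 2) = int n - 6" "int (me G 2 2) = int n - 7" "me G 3 3 = 7"
    using stats(1,2) m0 m12 m23 nv3 m assms(2) by linarith+
  then have "gamma65 n G"
    using G assms(2) m0 m12 m23 nv3 by (simp add: gamma65_def edge_profile_iff)
  with assms(4) show False ..
qed

lemma CTG_subcubic_gamma_k:
  assumes G: "CTG n G" and "4 < n" "nv G 1 = 0" "nv G 4 = 0"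
  shows "\<exists>k\<le>5. gamma_k n k G"
proof -
  note stats = CTG_degree_statistics[OF G]
  have sg: "simple_graph G" and fin: "finite (verts G)" and card_V: "card (verts G) = n"
    using G by (simp_all add: CTG_def simple_graph_def)
  have m0: "me G 1 1 = 0" "me G 1 2 = 0" "me G 1 3 = 0" "me G 1 4 = 0"
    "me G 2 4 = 0" "me G 3 4 = 0" "me G 4 4 = 0"
    using stats(3,6) assms(3,4) by simp_all
  then have nv3: "nv G 3 = 4" and m: "me G 2 3 + 2 * me G 3 3 = 12"
    using stats assms(3,4) by linarith+
  have "me G 2 3 \<noteq> 0"
  proof
    assume m23: "me G 2 3 = 0"
    let ?S = "{v \<in> verts G. deg G v = 3}"
    obtain x where x: "x \<in> ?S"
      using nv3 unfolding nv_def by (metis card.empty ex_in_conv zero_neq_numeral)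
    have "?S \<noteq> verts G"
      using nv3 card_V assms(2) unfolding nv_def by auto
    then obtain y where y: "y \<in> verts G" "y \<notin> ?S"
      by blast
    obtain u v where uv: "{u, v} \<in> edges G" "u \<in> ?S" "v \<notin> ?S"
      using connected_graph_edge_leaving[of G x ?S y] G x y by (auto simp: CTG_def)
    have v: "v \<in> verts G"
      using edge_subset_verts[OF sg uv(1)] by blast
    have "0 < deg G v" "deg G v \<le> 4" "deg G v \<noteq> 1" "deg G v \<noteq> 3" "deg G v \<noteq> 4"
      using CTG_deg_pos[OF G v] G v uv(3) assms(3,4) nv_eq_0_iff[OF fin] by (auto simp: CTG_def)
    then have "deg G v = 2"
      by presburger
    then have "1 \<le> me G 3 2"
      using me_pos_if_edge[OF sg uv(1)] uv(2,3) by force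
    with m23 show False
      by (simp add: me_commute)
  qed
  define k where "k = 5 - me G 3 3"
  have k: "k \<le> 5" "int (me G 3 3) = 5 - int k" "me G 2 3 = 2 + 2 * k"
    using m \<open>me G 2 3 \<noteq> 0\<close> unfolding k_def by presburger+
  have "int (nv G 2) = int n - 4" "int (me G 2 2) = int n - 5 - int k"
    using stats(1,2) assms(3,4) nv3 m0 k by linarith+
  then have "gamma_k n k G"
    using G assms(3,4) nv3 m0 k by (simp add: gamma_k_def edge_profile_iff)
  with k(1) show ?thesis
    by blast
qed

lemma SO_gt_outside_gammas:
  assumes "6 \<le> n" and G: "CTG n G" and "\<forall>k\<le>5. \<not> gamma_k n k G" "\<not> gamma65 n G"
  shows "sqrt 2 * (2 * real n + 10) + sombor_slack 1 2 + sombor_slack 2 3 < SO G"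
proof -
  (* 1.5991 separates s(1,2) + s(2,3) = 1.59897.. from 4 s(3,4) = 1.61522.. *)
  have "15991 / 10000 \<le> sombor_excess G"
  proof -
    consider (degree_4) "1 \<le> nv G 4" | (pendant) "nv G 4 = 0" "1 \<le> nv G 1"
      | (subcubic) "nv G 1 = 0" "nv G 4 = 0"
      by linarith
    then show ?thesis
    proof cases
      case degree_4
      from CTG_degree_4_edges[OF G this] show ?thesis
        using sombor_excess_lower_bound[of G] by (elim disjE) linarith+
    next
      case pendant
      from CTG_pendant_outside_gamma65[OF G this assms(4)] show ?thesis
        using sombor_excess_lower_bound[of G] by (elim disjE conjE) linarith+
    next
      case subcubic
      with CTG_subcubic_gamma_k[OF G] assms(1,3) show ?thesis
        by auto
    qed
  qed
  then show ?thesis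
    using SO_eq_sombor_excess[OF G] sombor_slack_bounds by linarith
qed

theorem theorem3p12:
  fixes n :: nat
    and G1 :: "'a graph" and G2 :: "'b graph" and G3 :: "'c graph" and G4 :: "'d graph"
    and G5 :: "'e graph" and G6 :: "'f graph" and G7 :: "'g graph" and G :: "'h graph"
  assumes "n \<ge> 6"
    and "gamma_k n 0 G1" and "gamma_k n 1 G2" and "gamma_k n 2 G3" and "gamma_k n 3 G4"
    and "gamma_k n 4 G5" and "gamma_k n 5 G6" and "gamma65 n G7"
    and "CTG n G"
    and "\<forall>k\<le>5. \<not> gamma_k n k G" and "\<not> gamma65 n G"
  shows "SO G1 < SO G2 \<and> SO G2 < SO G3 \<and> SO G3 < SO G4 \<and> SO G4 < SO G5 \<and>
         SO G5 < SO G6 \<and> SO G6 < SO G7 \<and> SO G7 < SO G"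
proof -
  let ?base = "sqrt 2 * (2 * real n + 10)"
  have "SO G1 = ?base + 2 * sombor_slack 2 3" "SO G2 = ?base + 4 * sombor_slack 2 3"
    "SO G3 = ?base + 6 * sombor_slack 2 3" "SO G4 = ?base + 8 * sombor_slack 2 3"
    "SO G5 = ?base + 10 * sombor_slack 2 3" "SO G6 = ?base + 12 * sombor_slack 2 3"
    using SO_gamma_k[OF assms(2)] SO_gamma_k[OF assms(3)] SO_gamma_k[OF assms(4)]
      SO_gamma_k[OF assms(5)] SO_gamma_k[OF assms(6)] SO_gamma_k[OF assms(7)]
    by simp_all
  moreover have "0 < sombor_slack 2 3" "11 * sombor_slack 2 3 < sombor_slack 1 2"
    using sombor_slack_bounds by linarith+
  ultimately show ?thesis
    using SO_gamma65[OF assms(8)] SO_gt_outside_gammas[OF assms(1,9-11)] by linarith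
qed

end
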